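(* Let $p,n\in\mathbb{N}$ with $p\ge1$ even, $n\ge p+\frac p2$, and $r\in\mathbb{N}$ with $r\le p$. Then $$\overline{X}^{p,r,0}=n^{2r-1}\big(T_n^{\bm\alpha}-H_n^{\bm\alpha,1}\big),$$ where $\alpha_k=(-1)^r\mathcal{N}_{2p+1}^{(2r)}(p+1-k)$, $k=0,\dots,p$.
   Context: Cardinal B-spline: $\mathcal{N}_0(t)=1$ for $t\in[0,1)$, $0$ otherwise; $\mathcal{N}_p(t)=\frac{t}{p}\mathcal{N}_{p-1}(t)+\frac{p+1-t}{p}\mathcal{N}_{p-1}(t-1)$, $p\ge1$ (support $[0,p+1]$, $C^{p-1}$). Reduced-space basis ($p$ even): with $C_c(x)=\mathcal{N}_p\big(nx-c+\tfrac{p+1}{2}\big)$, for $i=1,\dots,n$, $x\in[0,1]$, $$\overline{N}^p_{i,0}(x)=\sum_{m\in\mathbb{Z}}\Big(C_{i-\frac12+2mn}(x)-C_{-(i-\frac12)+2mn}(x)\Big).$$ These form a basis of the $C^{p-1}$ splines of degree $p$ with breakpoints $k/n$ whose derivatives of all even orders $\le p-1$ vanish at $0$ and $1$. $\overline{X}^{p,r,0}_{i,j}=\int_0^1(\overline{N}^p_{i,0})^{(r)}(\overline{N}^p_{j,0})^{(r)}\,\mathrm{d}x$ (piecewise derivatives if $r=p$). With $\alpha_k=0$ for $k>p$: $(T_n^{\bm\alpha})_{i,j}=\alpha_{|i-j|}$ and $(H_n^{\bm\alpha,1})_{i,j}=\alpha_{i+j-1}+\alpha_{2n+1-i-j}$.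 *)

theory Defs
  imports "HOL-Analysis.Analysis"
begin

fun cardB :: "nat \<Rightarrow> real \<Rightarrow> real" where
  "cardB 0 t = (if 0 \<le> t \<and> t < 1 then 1 else 0)"
| "cardB (Suc q) t = t / real (Suc q) * cardB q t
                     + (real (Suc q) + 1 - t) / real (Suc q) * cardB q (t - 1)"

definition shiftB :: "nat \<Rightarrow> nat \<Rightarrow> real \<Rightarrow> real \<Rightarrow> real" where
  "shiftB p n c x = cardB p (real n * x - c + (real p + 1) / 2)"

text \<open>Reduced-space basis function bar N^p_{i,0} (defined on all reals via the
  locally finite sum over m in Z).\<close>
definition redB :: "nat \<Rightarrow> nat \<Rightarrow> nat \<Rightarrow> real \<Rightarrow> real" where
  "redB p n i x = (\<Sum>\<^sub>\<infinity>m::int.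
      shiftB p n (real i - 1/2 + 2 * real_of_int m * real n) x
    - shiftB p n (- (real i - 1/2) + 2 * real_of_int m * real n) x)"

text \<open>Matrix entries bar X^{p,r,0}_{i,j}; the r-th derivative is the iterated
  derivative (for r = p it agrees with the piecewise derivative except at
  finitely many points, which does not affect the integral).\<close>
definition Xbar :: "nat \<Rightarrow> nat \<Rightarrow> nat \<Rightarrow> nat \<Rightarrow> nat \<Rightarrow> real" where
  "Xbar p r n i j = integral {0..1}
      (\<lambda>x. (deriv ^^ r) (redB p n i) x * (deriv ^^ r) (redB p n j) x)"

definition alphaSeq :: "nat \<Rightarrow> nat \<Rightarrow> nat \<Rightarrow> real" where
  "alphaSeq p r k = (if k \<le> p then
      (-1) ^ r * (deriv ^^ (2 * r)) (cardB (2 * p + 1)) (real p + 1 - real k) else 0)"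

definition toepM :: "(nat \<Rightarrow> real) \<Rightarrow> nat \<Rightarrow> nat \<Rightarrow> real" where
  "toepM \<alpha> i j = \<alpha> (nat \<bar>int i - int j\<bar>)"

definition hankM :: "(nat \<Rightarrow> real) \<Rightarrow> nat \<Rightarrow> nat \<Rightarrow> nat \<Rightarrow> real" where
  "hankM \<alpha> n i j = \<alpha> (i + j - 1) + \<alpha> (2 * n + 1 - i - j)"

end

theory Submission
  imports Defs
begin

(* Since N_p'(t) = N_(p-1)(t) - N_(p-1)(t - 1), the r-th derivative of N_p is an r-fold backward
   difference.  Expanding the differences and using translation invariance, the correlation
   s |-> integral of N_p^(r)(u) N_p^(r)(u + s) becomes (-1)^r times a 2r-fold central difference of
   the autocorrelation of N_p, which is N_(2p+1)(p + 1 - s) because N_p is symmetric and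
   N_a * N_b = N_(a+b+1).  Hence that correlation at s = k is alpha_k.
   After the substitution u = n x, on [0, n] the i-th reduced basis function is the B-spline with
   left knot i - 1 - p/2 minus its mirror images in 0 and in n; all other periodic copies vanish
   there.  Reflecting the two half-line parts of the full-line correlation integrals into [0, n]
   shows that the integral of the product of the i-th and j-th functions over [0, n] is
   alpha_|i-j| - alpha_(i+j-1) - alpha_(2n+1-i-j); the chain rule and the substitution contribute
   the factor n^(2r-1). *)

section \<open>Cardinal B-splines\<close>

declare cardB.simps(2)[simp del]

lemma cardB_eq_0_outside: "t < 0 \<or> real p + 1 \<le> t \<Longrightarrow> cardB p t = 0"
  by (induction p arbitrary: t) (auto simp: cardB.simps)

lemma cardB_eq_0_notin: "t \<notin> {0..real p + 1} \<Longrightarrow> cardB p t = 0"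
  by (rule cardB_eq_0_outside) auto

lemma cardB_1: "cardB 1 t = max 0 (1 - \<bar>t - 1\<bar>)"
  by (auto simp: cardB.simps max_def abs_if)

lemma continuous_on_cardB: "1 \<le> p \<Longrightarrow> continuous_on UNIV (cardB p)"
proof (induction p rule: nat_induct_at_least)
  case base
  show ?case unfolding cardB_1[abs_def] by (intro continuous_intros)
next
  case (Suc q)
  have "continuous_on UNIV (\<lambda>t. cardB q (t - 1))"
    by (rule continuous_on_compose2[OF Suc.IH]) (auto intro: continuous_intros)
  with Suc.IH show ?case
    by (simp only: cardB.simps) (intro continuous_intros; simp)
qed

lemma cardB_symmetric: "1 \<le> p \<Longrightarrow> cardB p (real p + 1 - t) = cardB p t"
proof (induction p arbitrary: t rule: nat_induct_at_least)
  case base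
  show ?case unfolding cardB_1 by (simp add: abs_minus_commute)
next
  case (Suc q)
  have "cardB q (real (Suc q) + 1 - t) = cardB q (t - 1)"
    using Suc.IH[of "t - 1"] by (simp add: algebra_simps)
  moreover have "cardB q (real (Suc q) + 1 - t - 1) = cardB q t"
    using Suc.IH[of t] by (simp add: algebra_simps)
  ultimately show ?case
    by (simp add: cardB.simps[of q] algebra_simps)
qed

lemma borel_measurable_cardB [measurable]: "cardB p \<in> borel_measurable borel"
proof (induction p)
  case 0
  have "(\<lambda>t::real. if 0 \<le> t \<and> t < 1 then 1 else (0::real)) \<in> borel_measurable borel"
    by measurable
  then show ?case by (simp add: fun_eq_iff)
next
  case (Suc q)
  note [measurable] = Suc.IH
  have "(\<lambda>t. t / real (Suc q) * cardB q t + (real (Suc q) + 1 - t) / real (Suc q) * cardB q (t - 1))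
      \<in> borel_measurable borel"
    by measurable
  then show ?case by (simp only: cardB.simps[abs_def])
qed

lemma cardB_bounded: "\<exists>B. \<forall>t. \<bar>cardB p t\<bar> \<le> B"
proof (induction p)
  case 0
  show ?case by (rule exI[of _ 1]) auto
next
  case (Suc q)
  then obtain B where B: "\<And>t. \<bar>cardB q t\<bar> \<le> B" by blast
  have "\<bar>cardB (Suc q) t\<bar> \<le> 4 * B" for t
  proof (cases "t < 0 \<or> real (Suc q) + 1 \<le> t")
    case True
    then show ?thesis using cardB_eq_0_outside[OF True] B[of 0] by simp
  next
    case False
    then have "\<bar>t / real (Suc q)\<bar> \<le> 2" "\<bar>(real (Suc q) + 1 - t) / real (Suc q)\<bar> \<le> 2"
      by (simp_all add: divide_le_eq)
    then have "\<bar>t / real (Suc q) * cardB q t\<bar> \<le> 2 * B"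
        "\<bar>(real (Suc q) + 1 - t) / real (Suc q) * cardB q (t - 1)\<bar> \<le> 2 * B"
      unfolding abs_mult by (intro mult_mono B; simp)+
    then show ?thesis
      unfolding cardB.simps by (intro order_trans[OF abs_triangle_ineq]) linarith
  qed
  then show ?case by blast
qed

lemma cardB_0_has_real_derivative:
  assumes "t \<notin> \<int>" shows "(cardB 0 has_real_derivative 0) (at t)"
proof -
  define k where "k = \<lfloor>t\<rfloor>"
  have "t \<noteq> of_int k" using assms by auto
  then have t: "t \<in> {of_int k<..<of_int k + 1}"
    using floor_correct[of t] unfolding k_def by (auto simp: less_le)
  have agree: "cardB 0 t = cardB 0 x" if x: "x \<in> {of_int k<..<of_int k + 1}" for x
  proof -
    consider "k = 0" | "1 \<le> k" | "k \<le> -1" by linarith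
    then show ?thesis
    proof cases
      case 1
      with x t show ?thesis by simp
    next
      case 2
      then have "1 \<le> real_of_int k" by simp
      with x t show ?thesis by simp
    next
      case 3
      then have "real_of_int k \<le> -1" by simp
      with x t show ?thesis by simp
    qed
  qed
  have "((\<lambda>_. cardB 0 t) has_real_derivative 0) (at t)" by simp
  from has_field_derivative_transform_within_open[where g="cardB 0", OF this _ t agree]
  show ?thesis by simp
qed

lemma cardB_Suc_has_real_derivative:
  assumes "(cardB p has_real_derivative D0) (at t)" "(cardB p has_real_derivative D1) (at (t - 1))"
  shows "(cardB (Suc p) has_real_derivative
      (cardB p t - cardB p (t - 1) + t * D0 + (real (Suc p) + 1 - t) * D1) / real (Suc p)) (at t)"
proof -
  define c where "c = real (Suc p)"
  have c: "c \<noteq> 0" unfolding c_def by simp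
  have D1': "((\<lambda>x. cardB p (x - 1)) has_real_derivative D1) (at t)"
    using DERIV_shift[of "cardB p" D1 t "-1"] assms(2) by simp
  have "((\<lambda>t. t / c) has_real_derivative 1 / c) (at t)"
      "((\<lambda>t. (c + 1 - t) / c) has_real_derivative -1 / c) (at t)"
    using c by (auto intro!: derivative_eq_intros simp: field_simps)
  from DERIV_add[OF DERIV_mult[OF this(1) assms(1)] DERIV_mult[OF this(2) D1']]
  have "((\<lambda>t. t / c * cardB p t + (c + 1 - t) / c * cardB p (t - 1)) has_real_derivative
      1 / c * cardB p t + D0 * (t / c) + (-1 / c * cardB p (t - 1) + D1 * ((c + 1 - t) / c))) (at t)" .
  moreover have "1 / c * cardB p t + D0 * (t / c) + (-1 / c * cardB p (t - 1) + D1 * ((c + 1 - t) / c))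
      = (cardB p t - cardB p (t - 1) + t * D0 + (c + 1 - t) * D1) / c"
    using c by (simp add: field_simps)
  ultimately show ?thesis unfolding c_def by (simp only: cardB.simps[abs_def])
qed

lemma has_real_derivative_cardB_nonint:
  assumes "t \<notin> \<int>"
  shows "(cardB (Suc p) has_real_derivative cardB p t - cardB p (t - 1)) (at t)"
  using assms
proof (induction p arbitrary: t)
  case 0
  then have "t - 1 \<notin> \<int>" by simp
  from cardB_Suc_has_real_derivative[OF cardB_0_has_real_derivative[OF 0] cardB_0_has_real_derivative[OF this]]
  show ?case by simp
next
  case (Suc q)
  then have "t - 1 \<notin> \<int>" by simp
  note D = cardB_Suc_has_real_derivative[OF Suc.IH[OF Suc.prems] Suc.IH[OF this]]
  define c where "c = real (Suc q)"
  have "c > 0" unfolding c_def by simp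
  have X: "cardB (Suc q) t = t / c * cardB q t + (c + 1 - t) / c * cardB q (t - 1)"
    and Y: "cardB (Suc q) (t - 1) = (t - 1) / c * cardB q (t - 1) + (c + 2 - t) / c * cardB q (t - 1 - 1)"
    unfolding c_def by (simp_all add: cardB.simps algebra_simps)
  have c1: "real (Suc (Suc q)) = c + 1" unfolding c_def by simp
  have "t * (cardB q t - cardB q (t - 1)) + (c + 2 - t) * (cardB q (t - 1) - cardB q (t - 1 - 1))
      = c * (cardB (Suc q) t - cardB (Suc q) (t - 1))"
    unfolding X Y using \<open>c > 0\<close> by (simp add: field_simps)
  then have "(cardB (Suc q) t - cardB (Suc q) (t - 1) + t * (cardB q t - cardB q (t - 1))
        + (real (Suc (Suc q)) + 1 - t) * (cardB q (t - 1) - cardB q (t - 1 - 1))) / real (Suc (Suc q))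
      = cardB (Suc q) t - cardB (Suc q) (t - 1)"
    unfolding c1 using \<open>c > 0\<close> by (simp add: field_simps)
  with D show ?case by simp
qed

lemma cardB_Suc_has_integral_window: "(cardB p has_integral cardB (Suc p) s) {s - 1..s}"
proof -
  define J where "J = nat \<lceil>s\<rceil> + 1"
  have Js: "s < real J" unfolding J_def by linarith
  \<comment> \<open>a primitive of \<open>N\<^sub>p\<close> on \<open>(-\<infinity>, s]\<close> off the integers: its derivative telescopes\<close>
  define M where "M x = (\<Sum>j<J. cardB (Suc p) (x - real j))" for x
  have "M s - M (s - 1) = (\<Sum>j<J. cardB (Suc p) (s - real j) - cardB (Suc p) (s - real (Suc j)))"
    unfolding M_def by (simp add: sum_subtractf algebra_simps)
  also have "\<dots> = cardB (Suc p) s"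
    using sum_lessThan_telescope'[of "\<lambda>j. cardB (Suc p) (s - real j)" J] Js
    by (simp add: cardB_eq_0_outside)
  finally have M: "M s - M (s - 1) = cardB (Suc p) s" .
  define S where "S = real_of_int ` {\<lfloor>s\<rfloor> - 1 .. \<lfloor>s\<rfloor>}"
  have nonint: "x \<notin> \<int>" if x: "x \<in> {s - 1<..<s} - S" for x
  proof
    assume "x \<in> \<int>"
    then obtain k where k: "x = real_of_int k" by (auto elim: Ints_cases)
    with x have "k \<le> \<lfloor>s\<rfloor>" "\<lfloor>s\<rfloor> \<le> k + 1"
      by (simp_all add: le_floor_iff floor_le_iff)
    with x k show False unfolding S_def by auto
  qed
  have "(M has_real_derivative cardB p x) (at x)" if "x \<in> {s - 1<..<s} - S" for x
  proof -
    have "((\<lambda>x. cardB (Suc p) (x - real j)) has_real_derivative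
        cardB p (x - real j) - cardB p (x - real (Suc j))) (at x)" for j
      using has_real_derivative_cardB_nonint[of "x - real j" p] nonint[OF that]
        DERIV_shift[of "cardB (Suc p)" _ x "- real j"]
      by (simp add: algebra_simps)
    then have "(M has_real_derivative (\<Sum>j<J. cardB p (x - real j) - cardB p (x - real (Suc j)))) (at x)"
      unfolding M_def[abs_def] by (intro DERIV_sum)
    moreover have "(\<Sum>j<J. cardB p (x - real j) - cardB p (x - real (Suc j))) = cardB p x"
      using sum_lessThan_telescope'[of "\<lambda>j. cardB p (x - real j)" J] Js that
      by (simp add: cardB_eq_0_outside)
    ultimately show ?thesis by simp
  qed
  moreover have "continuous_on {s - 1..s} M"
    unfolding M_def
    by (intro continuous_on_sum continuous_on_compose2[OF continuous_on_cardB[of "Suc p"]])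
      (auto intro!: continuous_intros)
  ultimately have "(cardB p has_integral (M s - M (s - 1))) {s - 1..s}"
    by (intro fundamental_theorem_of_calculus_interior_strong[of S])
      (auto simp: S_def has_real_derivative_iff_has_vector_derivative)
  then show ?thesis unfolding M .
qed

lemma has_real_derivative_integral_at:
  fixes f :: "real \<Rightarrow> real"
  assumes "continuous_on {a..b} f" and x: "x \<in> {a<..<b}"
  shows "((\<lambda>x. integral {a..x} f) has_real_derivative f x) (at x)"
proof -
  have "((\<lambda>x. integral {a..x} f) has_real_derivative f x) (at x within {a..b})"
    using x by (intro integral_has_real_derivative[OF assms(1)]) simp
  then have "((\<lambda>x. integral {a..x} f) has_real_derivative f x) (at x within {a<..<b})"
    by (rule DERIV_subset) auto
  then show ?thesis using at_within_open[of x "{a<..<b}"] x by simp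
qed

lemma has_real_derivative_window_integral:
  fixes f :: "real \<Rightarrow> real"
  assumes "continuous_on UNIV f"
  shows "((\<lambda>s. integral {s - 1..s} f) has_real_derivative f t - f (t - 1)) (at t)"
proof -
  define a where "a = t - 2"
  have f: "continuous_on {a..t + 1} f" using assms by (rule continuous_on_subset) simp
  have "((\<lambda>s. integral {a..s - 1} f) has_real_derivative f (t - 1)) (at t)"
    using DERIV_chain2[OF has_real_derivative_integral_at[OF f] DERIV_diff[OF DERIV_ident DERIV_const[of 1]]]
    by (simp add: a_def)
  from DERIV_diff[OF has_real_derivative_integral_at[OF f] this]
  have D: "((\<lambda>s. integral {a..s} f - integral {a..s - 1} f) has_real_derivative f t - f (t - 1)) (at t)"
    by (simp add: a_def)
  have "integral {a..s} f - integral {a..s - 1} f = integral {s - 1..s} f"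
    if "s \<in> {t - 1<..<t + 1}" for s
    using Henstock_Kurzweil_Integration.integral_combine[of a "s - 1" s f] that
      integrable_continuous_real[OF continuous_on_subset[OF assms, of "{a..s}"]]
    by (simp add: a_def)
  from has_field_derivative_transform_within_open[where S="{t - 1<..<t + 1}", OF D _ _ this]
  show ?thesis by simp
qed

lemma cardB_Suc_eq_window_integral: "cardB (Suc p) s = integral {s - 1..s} (cardB p)"
  using cardB_Suc_has_integral_window by (rule integral_unique[symmetric])

lemma has_real_derivative_cardB:
  assumes "t \<notin> \<int> \<or> 1 \<le> p"
  shows "(cardB (Suc p) has_real_derivative cardB p t - cardB p (t - 1)) (at t)"
  using assms
proof
  assume "1 \<le> p"
  then show ?thesis
    unfolding cardB_Suc_eq_window_integral[abs_def]
    by (intro has_real_derivative_window_integral continuous_on_cardB)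
qed (rule has_real_derivative_cardB_nonint)

section \<open>Convolutions of B-splines\<close>

lemma integrable_bounded_compact_support:
  fixes f :: "real \<Rightarrow> real"
  assumes [measurable]: "f \<in> borel_measurable borel"
    and "\<And>t. \<bar>f t\<bar> \<le> B" and "\<And>t. t \<notin> {a..b} \<Longrightarrow> f t = 0"
  shows "integrable lborel f"
proof (rule Bochner_Integration.integrable_bound)
  show "integrable lborel (\<lambda>x. B * indicator {a..b} x :: real)"
    by (intro integrable_mult_right integrable_real_indicator) (auto simp: emeasure_lborel_Icc_eq)
  have "0 \<le> B" using assms(2)[of a] by linarith
  with assms(2,3) show "AE x in lborel. norm (f x) \<le> norm (B * indicator {a..b} x :: real)"
    by (intro AE_I2) (auto simp: indicator_def)
qed simp

lemma integrable_mult_bounded_compact_support: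
  fixes f g :: "real \<Rightarrow> real"
  assumes [measurable]: "f \<in> borel_measurable borel" "g \<in> borel_measurable borel"
    and "\<And>t. \<bar>f t\<bar> \<le> Bf" "\<And>t. \<bar>g t\<bar> \<le> Bg" "\<And>t. t \<notin> {a..b} \<Longrightarrow> f t = 0"
  shows "integrable lborel (\<lambda>t. f t * g t)"
proof (rule integrable_bounded_compact_support[where B="Bf * Bg" and a=a and b=b])
  show "\<bar>f t * g t\<bar> \<le> Bf * Bg" for t
    unfolding abs_mult by (rule mult_mono) (use assms(3,4)[of t] in auto)
qed (use assms(5) in simp_all)

lemma integral_lborel_eq_has_integral:
  fixes f :: "real \<Rightarrow> real"
  assumes "integrable lborel f" "(f has_integral I) UNIV"
  shows "integral\<^sup>L lborel f = I"
  by (rule has_integral_unique[OF has_integral_integral_lborel[OF assms(1)] assms(2)])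

lemma integral_lborel_cardB_times_cardB_0:
  "(\<integral>u. cardB p u * cardB 0 (s - u) \<partial>lborel) = cardB (Suc p) s"
proof (rule integral_lborel_eq_has_integral)
  obtain B where B: "\<And>t. \<bar>cardB p t\<bar> \<le> B" using cardB_bounded by blast
  then have "0 \<le> B" using B[of 0] by linarith
  with B show "integrable lborel (\<lambda>u. cardB p u * cardB 0 (s - u))"
    by (intro integrable_bounded_compact_support[where B=B and a="s - 1" and b=s]) auto
  have "((\<lambda>u. if u \<in> {s - 1..s} then cardB p u else 0) has_integral cardB (Suc p) s) UNIV"
    using cardB_Suc_has_integral_window has_integral_restrict_UNIV by blast
  then show "((\<lambda>u. cardB p u * cardB 0 (s - u)) has_integral cardB (Suc p) s) UNIV"
    by (rule has_integral_spike_finite[where S="{s - 1}", rotated 2]) auto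
qed

definition cardB_conv :: "nat \<Rightarrow> nat \<Rightarrow> real \<Rightarrow> real" where
  "cardB_conv a b s = (\<integral>u. cardB a u * cardB b (s - u) \<partial>lborel)"

lemma cardB_conv_commute: "cardB_conv a b s = cardB_conv b a s"
proof -
  have "cardB_conv a b s
      = \<bar>-1\<bar> *\<^sub>R (\<integral>x. cardB a (s + -1 * x) * cardB b (s - (s + -1 * x)) \<partial>lborel)"
    unfolding cardB_conv_def by (rule lborel_integral_real_affine) simp
  also have "\<dots> = cardB_conv b a s"
    unfolding cardB_conv_def by (simp add: mult.commute)
  finally show ?thesis .
qed

lemma integrable_cardB_triple_product:
  "integrable (lborel \<Otimes>\<^sub>M lborel)
     (\<lambda>(u::real, w::real). cardB a u * (cardB b w * cardB 0 (s - u - w)))"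
proof -
  obtain B1 where B1: "\<And>t. \<bar>cardB a t\<bar> \<le> B1" using cardB_bounded by blast
  obtain B2 where B2: "\<And>t. \<bar>cardB b t\<bar> \<le> B2" using cardB_bounded by blast
  obtain B0 where B0: "\<And>t. \<bar>cardB 0 t\<bar> \<le> B0" using cardB_bounded by blast
  let ?box = "cbox ((0::real), (0::real)) (real a + 1, real b + 1)"
  have bound: "integrable (lborel \<Otimes>\<^sub>M lborel) (\<lambda>x. (B1 * B2 * B0) * indicator ?box x :: real)"
    unfolding lborel_prod
    using emeasure_lborel_cbox_finite[of "(0::real, 0::real)" "(real a + 1, real b + 1)"]
    by (intro integrable_mult_right integrable_real_indicator) auto
  have dominated: "AE x in lborel \<Otimes>\<^sub>M lborel.
      norm ((\<lambda>(u, w). cardB a u * (cardB b w * cardB 0 (s - u - w))) x)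
      \<le> norm ((B1 * B2 * B0) * indicator ?box x :: real)"
  proof (intro AE_I2)
    fix x :: "real \<times> real"
    obtain u w where x: "x = (u, w)" by (cases x)
    show "norm ((\<lambda>(u, w). cardB a u * (cardB b w * cardB 0 (s - u - w))) x)
      \<le> norm ((B1 * B2 * B0) * indicator ?box x :: real)"
    proof (cases "x \<in> ?box")
      case True
      have "\<bar>cardB a u * (cardB b w * cardB 0 (s - u - w))\<bar> \<le> B1 * (B2 * B0)"
        unfolding abs_mult using B1[of 0] B2[of 0]
        by (intro mult_mono B1 B2 B0) auto
      then show ?thesis using True x by (auto simp: mult.assoc)
    next
      case False
      then have "u \<notin> {0..real a + 1} \<or> w \<notin> {0..real b + 1}" using x by auto
      then have "cardB a u = 0 \<or> cardB b w = 0" using cardB_eq_0_notin by blast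
      then show ?thesis using x by auto
    qed
  qed
  have "(\<lambda>(u::real, w::real). cardB a u * (cardB b w * cardB 0 (s - u - w)))
      \<in> borel_measurable (lborel \<Otimes>\<^sub>M lborel)"
    by measurable
  from Bochner_Integration.integrable_bound[OF bound this dominated] show ?thesis .
qed

lemma cardB_conv_eq: "cardB_conv a b s = cardB (a + b + 1) s"
proof (induction b arbitrary: a s)
  case 0
  show ?case unfolding cardB_conv_def using integral_lborel_cardB_times_cardB_0[of a s] by simp
next
  case (Suc b)
  have "cardB_conv a (Suc b) s
      = (\<integral>u. (\<integral>w. cardB a u * (cardB b w * cardB 0 (s - u - w)) \<partial>lborel) \<partial>lborel)"
    unfolding cardB_conv_def
    using integral_lborel_cardB_times_cardB_0[of b "s - _", symmetric]
    by (simp add: algebra_simps)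
  also have "\<dots> = (\<integral>w. (\<integral>u. cardB a u * (cardB b w * cardB 0 (s - u - w)) \<partial>lborel) \<partial>lborel)"
    using lborel_pair.Fubini_integral[OF integrable_cardB_triple_product[of a b s]] by simp
  also have "\<dots> = cardB_conv b (Suc a) s"
    unfolding cardB_conv_def
  proof (intro Bochner_Integration.integral_cong refl)
    fix w :: real
    have "(\<lambda>u. cardB a u * (cardB b w * cardB 0 (s - u - w)))
        = (\<lambda>u. cardB b w * (cardB a u * cardB 0 (s - w - u)))"
      by (rule ext) (simp add: algebra_simps)
    then show "(\<integral>u. cardB a u * (cardB b w * cardB 0 (s - u - w)) \<partial>lborel)
        = cardB b w * cardB (Suc a) (s - w)"
      using integral_lborel_cardB_times_cardB_0[of a "s - w"] by simp
  qed
  also have "\<dots> = cardB (a + Suc b + 1) s"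
    using Suc.IH[of "Suc a" s] by (simp add: cardB_conv_commute)
  finally show ?case .
qed

text \<open>The symmetry of \<open>N\<^sub>q\<close> turns the correlation into a convolution.\<close>
lemma cardB_autocorrelation:
  "(\<integral>v. cardB q v * cardB q (v + s) \<partial>lborel) = cardB (2 * q + 1) (real q + 1 - s)"
proof -
  have "(\<integral>v. cardB q v * cardB q (v + s) \<partial>lborel) = cardB_conv q q (real q + 1 - s)"
    unfolding cardB_conv_def
  proof (rule integral_cong_AE)
    have "AE v in lborel. v \<noteq> - s" "AE v in lborel. v \<noteq> 1 - s"
      by (rule AE_lborel_singleton)+
    then show "AE v in lborel. cardB q v * cardB q (v + s) = cardB q v * cardB q (real q + 1 - s - v)"
    proof eventually_elim
      case (elim v)
      show ?case
      proof (cases "q \<ge> 1")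
        case True
        then show ?thesis using cardB_symmetric[OF True, of "v + s"] by (simp add: algebra_simps)
      next
        case False
        then have "q = 0" by simp
        moreover have "v + s \<noteq> 0" "v + s \<noteq> 1" using elim by auto
        ultimately show ?thesis by auto
      qed
    qed
  qed measurable
  also have "\<dots> = cardB (2 * q + 1) (real q + 1 - s)" by (simp add: cardB_conv_eq mult_2)
  finally show ?thesis .
qed

section \<open>Derivatives of B-splines and their correlations\<close>

text \<open>The \<open>r\<close>-th derivative of \<open>N\<^sub>p\<close> (off the integers if \<open>r = p\<close>), obtained from
  \<open>N\<^sub>p' t = N\<^sub>p\<^sub>-\<^sub>1 t - N\<^sub>p\<^sub>-\<^sub>1 (t - 1)\<close>.\<close>
fun cardB_deriv :: "nat \<Rightarrow> nat \<Rightarrow> real \<Rightarrow> real" where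
  "cardB_deriv p 0 t = cardB p t"
| "cardB_deriv 0 (Suc r) t = 0"
| "cardB_deriv (Suc p) (Suc r) t = cardB_deriv p r t - cardB_deriv p r (t - 1)"

lemma borel_measurable_cardB_deriv [measurable]: "cardB_deriv p r \<in> borel_measurable borel"
proof (induction r arbitrary: p)
  case (Suc r)
  show ?case
  proof (cases p)
    case (Suc q)
    note [measurable] = Suc.IH[of q]
    have "(\<lambda>t. cardB_deriv q r t - cardB_deriv q r (t - 1)) \<in> borel_measurable borel"
      by measurable
    then show ?thesis using Suc by simp
  qed simp
next
  case 0
  have "cardB_deriv p 0 = cardB p" by (rule ext) simp
  then show ?case by simp
qed

lemma cardB_deriv_bounded: "\<exists>B. \<forall>t. \<bar>cardB_deriv p r t\<bar> \<le> B"
proof (induction r arbitrary: p)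
  case 0
  then show ?case using cardB_bounded[of p] by simp
next
  case (Suc r)
  show ?case
  proof (cases p)
    case (Suc q)
    obtain B where B: "\<And>t. \<bar>cardB_deriv q r t\<bar> \<le> B" using Suc.IH[of q] by blast
    have "\<bar>cardB_deriv (Suc q) (Suc r) t\<bar> \<le> 2 * B" for t
      using B[of t] B[of "t - 1"] by simp
    then show ?thesis using Suc by blast
  qed auto
qed

lemma cardB_deriv_eq_0_notin: "t \<notin> {0..real p + 1} \<Longrightarrow> cardB_deriv p r t = 0"
proof (induction r arbitrary: p t)
  case (Suc r)
  then show ?case by (cases p) auto
qed (simp add: cardB_eq_0_notin)

lemma cardB_deriv_eq_0_nonpos: "r < p \<Longrightarrow> t \<le> 0 \<Longrightarrow> cardB_deriv p r t = 0"
proof (induction r arbitrary: p t)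
  case 0
  then obtain q where "p = Suc q" by (cases p) auto
  with 0 show ?case by (cases "t = 0") (simp_all add: cardB.simps cardB_eq_0_outside)
next
  case (Suc r)
  then show ?case by (cases p) auto
qed

lemma integrable_cardB_deriv_product:
  "integrable lborel (\<lambda>u. cardB_deriv p r (u - a) * cardB_deriv p r (u - b))"
proof -
  obtain B where B: "\<And>t. \<bar>cardB_deriv p r t\<bar> \<le> B" using cardB_deriv_bounded by blast
  show ?thesis
    by (rule integrable_mult_bounded_compact_support[where Bf=B and Bg=B and a=a and b="a + real p + 1"])
      (use B in \<open>auto intro!: cardB_deriv_eq_0_notin\<close>)
qed

lemma has_real_derivative_cardB_deriv:
  "r < p \<Longrightarrow> Suc r < p \<or> t \<notin> \<int> \<Longrightarrow>
    (cardB_deriv p r has_real_derivative cardB_deriv p (Suc r) t) (at t)"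
proof (induction r arbitrary: p t)
  case 0
  then obtain q where p: "p = Suc q" by (cases p) auto
  have "cardB_deriv (Suc q) 0 = cardB (Suc q)" by (rule ext) simp
  moreover have "t \<notin> \<int> \<or> 1 \<le> q" using 0 p by auto
  ultimately show ?case using has_real_derivative_cardB unfolding p by simp
next
  case (Suc r)
  then obtain q where p: "p = Suc q" by (cases p) auto
  have hyps: "r < q" "Suc r < q \<or> t \<notin> \<int>" "Suc r < q \<or> t - 1 \<notin> \<int>"
    using Suc.prems p by auto
  have "(cardB_deriv q r has_real_derivative cardB_deriv q (Suc r) (t - 1)) (at (t + -1))"
    using Suc.IH[OF hyps(1,3)] by simp
  from DERIV_diff[OF Suc.IH[OF hyps(1,2)] DERIV_shift[THEN iffD1, OF this]]
  have "((\<lambda>t. cardB_deriv q r t - cardB_deriv q r (t - 1)) has_real_derivative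
      cardB_deriv q (Suc r) t - cardB_deriv q (Suc r) (t - 1)) (at t)"
    by simp
  then show ?case unfolding p by simp
qed

lemma funpow_deriv_cardB: "r < p \<Longrightarrow> (deriv ^^ r) (cardB p) = cardB_deriv p r"
proof (induction r)
  case (Suc r)
  then have "(deriv ^^ Suc r) (cardB p) = deriv (cardB_deriv p r)" by simp
  also have "\<dots> = cardB_deriv p (Suc r)"
    by (rule ext, rule DERIV_imp_deriv, rule has_real_derivative_cardB_deriv) (use Suc.prems in auto)
  finally show ?case .
qed (simp add: fun_eq_iff)

lemma cardB_deriv_symmetric:
  "r \<le> p \<Longrightarrow> r < p \<or> t \<notin> \<int> \<Longrightarrow> cardB_deriv p r (real p + 1 - t) = (-1) ^ r * cardB_deriv p r t"
proof (induction r arbitrary: p t)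
  case 0
  show ?case
  proof (cases "1 \<le> p")
    case True
    then show ?thesis using cardB_symmetric by simp
  next
    case False
    with 0 have "p = 0" "t \<noteq> 0" "t \<noteq> 1" by auto
    then show ?thesis by auto
  qed
next
  case (Suc r)
  then obtain q where p: "p = Suc q" by (cases p) auto
  have "r \<le> q" "r < q \<or> t \<notin> \<int>" "r < q \<or> t - 1 \<notin> \<int>" using Suc.prems p by auto
  with Suc.IH have "cardB_deriv q r (real q + 1 - (t - 1)) = (-1) ^ r * cardB_deriv q r (t - 1)"
    "cardB_deriv q r (real q + 1 - t) = (-1) ^ r * cardB_deriv q r t"
    by blast+
  then show ?case unfolding p by (simp add: algebra_simps)
qed

definition cardB_corr :: "nat \<Rightarrow> nat \<Rightarrow> real \<Rightarrow> real" where
  "cardB_corr p r s = (\<integral>u. cardB_deriv p r u * cardB_deriv p r (u + s) \<partial>lborel)"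

lemma integral_lborel_shift: "(\<integral>u. f (u - c) \<partial>lborel) = (\<integral>u. f u \<partial>lborel)"
  for f :: "real \<Rightarrow> real"
  using lborel_integral_real_affine[of 1 "\<lambda>u. f (u - c)" c] by simp

lemma cardB_corr_even: "cardB_corr p r (- s) = cardB_corr p r s"
  unfolding cardB_corr_def
  using integral_lborel_shift[of "\<lambda>u. cardB_deriv p r (u + s) * cardB_deriv p r u" s]
  by (simp add: mult.commute)

lemma cardB_corr_Suc:
  "cardB_corr (Suc p) (Suc r) s
    = 2 * cardB_corr p r s - cardB_corr p r (s - 1) - cardB_corr p r (s + 1)"
proof -
  let ?f = "cardB_deriv p r"
  have i: "integrable lborel (\<lambda>u. ?f (u - c) * ?f (u + d))" for c d
    using integrable_cardB_deriv_product[of p r c "- d"] by simp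
  have i0: "integrable lborel (\<lambda>u. ?f u * ?f (u + d))" for d
    using i[of 0 d] by simp
  have e: "cardB_deriv (Suc p) (Suc r) u * cardB_deriv (Suc p) (Suc r) (u + s) =
      ?f u * ?f (u + s) - ?f u * ?f (u + (s - 1))
      - ?f (u - 1) * ?f (u + s) + ?f (u - 1) * ?f (u + (s - 1))" for u
    by (simp add: algebra_simps)
  have "cardB_corr (Suc p) (Suc r) s =
      (\<integral>u. ?f u * ?f (u + s) \<partial>lborel) - (\<integral>u. ?f u * ?f (u + (s - 1)) \<partial>lborel)
      - (\<integral>u. ?f (u - 1) * ?f (u + s) \<partial>lborel) + (\<integral>u. ?f (u - 1) * ?f (u + (s - 1)) \<partial>lborel)"
    unfolding cardB_corr_def e
    by (simp add: Bochner_Integration.integral_add Bochner_Integration.integral_diff i i0)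
  also have "(\<integral>u. ?f (u - 1) * ?f (u + s) \<partial>lborel) = (\<integral>u. ?f u * ?f (u + (s + 1)) \<partial>lborel)"
    using integral_lborel_shift[of "\<lambda>u. ?f u * ?f (u + (s + 1))" 1] by (simp add: algebra_simps)
  also have "(\<integral>u. ?f (u - 1) * ?f (u + (s - 1)) \<partial>lborel) = (\<integral>u. ?f u * ?f (u + s) \<partial>lborel)"
    using integral_lborel_shift[of "\<lambda>u. ?f u * ?f (u + s)" 1] by (simp add: algebra_simps)
  finally show ?thesis unfolding cardB_corr_def by simp
qed

lemma cardB_corr_eq:
  "r \<le> p \<Longrightarrow> cardB_corr p r s = (-1) ^ r * cardB_deriv (2 * p + 1) (2 * r) (real p + 1 - s)"
proof (induction r arbitrary: p s)
  case 0
  show ?case unfolding cardB_corr_def using cardB_autocorrelation[of p s] by simp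
next
  case (Suc r)
  then obtain q where p: "p = Suc q" and "r \<le> q" by (cases p) auto
  let ?g = "cardB_deriv (2 * q + 1) (2 * r)"
  have "cardB_corr p (Suc r) s = 2 * cardB_corr q r s - cardB_corr q r (s - 1) - cardB_corr q r (s + 1)"
    unfolding p by (rule cardB_corr_Suc)
  also have "\<dots> = (-1) ^ r * (2 * ?g (real q + 1 - s) - ?g (real q + 1 - (s - 1)) - ?g (real q + 1 - (s + 1)))"
    using Suc.IH[OF \<open>r \<le> q\<close>] by (simp add: algebra_simps)
  also have "\<dots> = (-1) ^ Suc r * cardB_deriv (2 * p + 1) (2 * Suc r) (real p + 1 - s)"
    using p by (simp add: numeral_2_eq_2 algebra_simps)
  finally show ?case .
qed

section \<open>Correlations over subsets and reflection\<close>

definition cardB_corr_on :: "nat \<Rightarrow> nat \<Rightarrow> real set \<Rightarrow> real \<Rightarrow> real \<Rightarrow> real" where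
  "cardB_corr_on p r S a b =
     (\<integral>u. indicator S u * (cardB_deriv p r (u - a) * cardB_deriv p r (u - b)) \<partial>lborel)"

lemma integrable_cardB_corr_on:
  assumes [measurable]: "S \<in> sets borel"
  shows "integrable lborel (\<lambda>u. indicator S u * (cardB_deriv p r (u - a) * cardB_deriv p r (u - b)))"
proof -
  obtain B where B: "\<And>t. \<bar>cardB_deriv p r t\<bar> \<le> B" using cardB_deriv_bounded by blast
  then have "0 \<le> B" using B[of 0] by linarith
  have "integrable lborel
      (\<lambda>u. (indicator S u * cardB_deriv p r (u - a)) * cardB_deriv p r (u - b))"
    by (rule integrable_mult_bounded_compact_support[where Bf=B and Bg=B and a=a and b="a + real p + 1"])
      (use B \<open>0 \<le> B\<close> in \<open>auto simp: indicator_def intro!: cardB_deriv_eq_0_notin\<close>)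
  then show ?thesis by (simp add: mult.assoc)
qed

lemma cardB_corr_on_UNIV: "cardB_corr_on p r UNIV a b = cardB_corr p r (a - b)"
  unfolding cardB_corr_on_def cardB_corr_def
  using integral_lborel_shift[of "\<lambda>u. cardB_deriv p r u * cardB_deriv p r (u + (a - b))" a]
  by simp

lemma cardB_corr_on_split:
  assumes "0 \<le> c"
  shows "cardB_corr_on p r UNIV a b
    = cardB_corr_on p r {..<0} a b + cardB_corr_on p r {0..c} a b + cardB_corr_on p r {c<..} a b"
proof -
  have e: "indicator UNIV u * X = indicator {..<0} u * X + indicator {0..c} u * X + indicator {c<..} u * X"
    for u and X :: real
    using assms by (auto simp: indicator_def)
  have i: "integrable lborel (\<lambda>u. indicator {..<0} u * (cardB_deriv p r (u - a) * cardB_deriv p r (u - b)))"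
      "integrable lborel (\<lambda>u. indicator {0..c} u * (cardB_deriv p r (u - a) * cardB_deriv p r (u - b)))"
      "integrable lborel (\<lambda>u. indicator {c<..} u * (cardB_deriv p r (u - a) * cardB_deriv p r (u - b)))"
    by (rule integrable_cardB_corr_on; simp)+
  show ?thesis
    unfolding cardB_corr_on_def e
    using Bochner_Integration.integral_add[OF Bochner_Integration.integrable_add[OF i(1,2)] i(3)]
      Bochner_Integration.integral_add[OF i(1,2)]
    by (simp only:)
qed

lemma cardB_corr_on_cong:
  assumes [measurable]: "S \<in> sets borel" "S' \<in> sets borel"
    and "\<And>u. u \<noteq> d \<Longrightarrow> indicator S u * (cardB_deriv p r (u - a) * cardB_deriv p r (u - b))
                    = indicator S' u * (cardB_deriv p r (u - a') * cardB_deriv p r (u - b'))"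
  shows "cardB_corr_on p r S a b = cardB_corr_on p r S' a' b'"
  unfolding cardB_corr_on_def
proof (rule integral_cong_AE)
  show "AE u in lborel. indicator S u * (cardB_deriv p r (u - a) * cardB_deriv p r (u - b))
                      = indicator S' u * (cardB_deriv p r (u - a') * cardB_deriv p r (u - b'))"
    using AE_lborel_singleton[of d] by eventually_elim (use assms(3) in auto)
qed measurable

lemma cardB_corr_on_eq_0:
  assumes "\<And>u. u \<in> S \<Longrightarrow> cardB_deriv p r (u - a) * cardB_deriv p r (u - b) = 0"
  shows "cardB_corr_on p r S a b = 0"
proof -
  have "(\<lambda>u. indicator S u * (cardB_deriv p r (u - a) * cardB_deriv p r (u - b))) = (\<lambda>u. 0::real)"
    using assms by (auto simp: indicator_def fun_eq_iff)
  then show ?thesis unfolding cardB_corr_on_def by simp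
qed

lemma AE_lborel_diff_notin_Ints: "AE x in lborel. x - d \<notin> (\<int> :: real set)"
proof -
  have "countable ((\<lambda>z. z + d) ` (\<int> :: real set))" by (intro countable_image countable_int)
  from AE_not_in[OF countable_imp_null_set_lborel[OF this]]
  show ?thesis by eventually_elim (metis diff_add_cancel image_eqI)
qed

text \<open>The signs \<open>(-1)\<^sup>r\<close> produced by the symmetry of the two reflected factors cancel.\<close>
lemma cardB_corr_on_reflect:
  assumes "r \<le> p" and [measurable]: "S \<in> sets borel"
  shows "cardB_corr_on p r S a b
    = cardB_corr_on p r ((\<lambda>x. 2 * c - x) -` S) (2 * c - a - (real p + 1)) (2 * c - b - (real p + 1))"
proof -
  let ?a = "2 * c - a - (real p + 1)" and ?b = "2 * c - b - (real p + 1)"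
  have "cardB_corr_on p r S a b = \<bar>-1\<bar> *\<^sub>R (\<integral>x. indicator S (2 * c + -1 * x)
      * (cardB_deriv p r (2 * c + -1 * x - a) * cardB_deriv p r (2 * c + -1 * x - b)) \<partial>lborel)"
    unfolding cardB_corr_on_def by (rule lborel_integral_real_affine) simp
  also have "\<dots> = cardB_corr_on p r ((\<lambda>x. 2 * c - x) -` S) ?a ?b"
    unfolding cardB_corr_on_def
  proof (simp, rule integral_cong_AE)
    show "AE x in lborel. indicator S (2 * c - x)
        * (cardB_deriv p r (2 * c - x - a) * cardB_deriv p r (2 * c - x - b))
      = indicator ((\<lambda>x. 2 * c - x) -` S) x * (cardB_deriv p r (x - ?a) * cardB_deriv p r (x - ?b))"
      using AE_lborel_diff_notin_Ints[of ?a] AE_lborel_diff_notin_Ints[of ?b]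
    proof eventually_elim
      case (elim x)
      have "cardB_deriv p r (real p + 1 - (x - ?a)) = (-1) ^ r * cardB_deriv p r (x - ?a)"
        "cardB_deriv p r (real p + 1 - (x - ?b)) = (-1) ^ r * cardB_deriv p r (x - ?b)"
        using elim by (intro cardB_deriv_symmetric[OF assms(1)]; simp)+
      moreover have "real p + 1 - (x - ?a) = 2 * c - x - a" "real p + 1 - (x - ?b) = 2 * c - x - b"
        by simp_all
      moreover have "((-1::real) ^ r) * (-1) ^ r = 1" by (simp flip: power_mult_distrib)
      ultimately show ?case by (simp add: indicator_def)
    qed
  qed measurable
  finally show ?thesis .
qed

lemma cardB_corr_on_left_tail:
  assumes "r \<le> p"
    and "\<And>u. c < u \<Longrightarrow> cardB_deriv p r (u - (- a - (real p + 1))) = 0"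
  shows "cardB_corr_on p r {..<0} a b = cardB_corr_on p r {0..c} (- a - (real p + 1)) (- b - (real p + 1))"
proof -
  have "(\<lambda>x. 2 * 0 - x) -` {..<0} = {0::real<..}" by auto
  then have "cardB_corr_on p r {..<0} a b
      = cardB_corr_on p r {0<..} (- a - (real p + 1)) (- b - (real p + 1))"
    using cardB_corr_on_reflect[OF assms(1), of "{..<0}" a b 0] by simp
  also have "\<dots> = cardB_corr_on p r {0..c} (- a - (real p + 1)) (- b - (real p + 1))"
    by (rule cardB_corr_on_cong[where d=0]) (use assms(2) in \<open>auto simp: indicator_def\<close>)
  finally show ?thesis .
qed

lemma cardB_corr_on_right_tail:
  assumes "r \<le> p"
    and "\<And>u. u < 0 \<Longrightarrow> cardB_deriv p r (u - (2 * c - a - (real p + 1))) = 0"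
  shows "cardB_corr_on p r {c<..} a b
    = cardB_corr_on p r {0..c} (2 * c - a - (real p + 1)) (2 * c - b - (real p + 1))"
proof -
  have "(\<lambda>x. 2 * c - x) -` {c<..} = {..<c}" by auto
  then have "cardB_corr_on p r {c<..} a b
      = cardB_corr_on p r {..<c} (2 * c - a - (real p + 1)) (2 * c - b - (real p + 1))"
    using cardB_corr_on_reflect[OF assms(1), of "{c<..}" a b c] by simp
  also have "\<dots> = cardB_corr_on p r {0..c} (2 * c - a - (real p + 1)) (2 * c - b - (real p + 1))"
    by (rule cardB_corr_on_cong[where d=c]) (use assms(2) in \<open>auto simp: indicator_def\<close>)
  finally show ?thesis .
qed

section \<open>The reduced basis\<close>

definition reduced_profile :: "nat \<Rightarrow> nat \<Rightarrow> real \<Rightarrow> real \<Rightarrow> real \<Rightarrow> real \<Rightarrow> real" where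
  "reduced_profile p r a b c u =
     cardB_deriv p r (u - a) - cardB_deriv p r (u - b) - cardB_deriv p r (u - c)"

text \<open>The integrals of the mirrored products over \<open>[0, n]\<close> are the integrals of the unmirrored
  ones over the two half-lines.\<close>
lemma integral_reduced_profile_product:
  fixes p r n i j m :: nat
  assumes pm: "p = 2 * m" and nm: "2 * m < n" and i: "i \<in> {1..n}" and j: "j \<in> {1..n}" and rp: "r \<le> p"
  defines "ea \<equiv> \<lambda>k::nat. real k - 1 - real m"
    and "eb \<equiv> \<lambda>k::nat. - real k - real m"
    and "ec \<equiv> \<lambda>k::nat. 2 * real n - real k - real m"
  shows "(\<integral>u. indicator {0..real n} u * (reduced_profile p r (ea i) (eb i) (ec i) u
                                      * reduced_profile p r (ea j) (eb j) (ec j) u) \<partial>lborel)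
    = cardB_corr p r (real i - real j) - cardB_corr p r (real i + real j - 1)
      - cardB_corr p r (2 * real n + 1 - real i - real j)"
proof -
  let ?W = "cardB_corr_on p r" and ?N = "{0..real n}"
  have mn: "real m < real n - real m" using nm by linarith
  have pr: "real p + 1 = 2 * real m + 1" using pm by simp
  have eb0: "cardB_deriv p r (u - eb k) = 0" if "k \<in> {1..n}" "u > real m" for k u
    unfolding eb_def by (rule cardB_deriv_eq_0_notin) (use that pr in auto)
  have ec0: "cardB_deriv p r (u - ec k) = 0" if "k \<in> {1..n}" "u < real n - real m" for k u
    unfolding ec_def by (rule cardB_deriv_eq_0_notin) (use that in auto)
  have ea_eb: "- ea k - (real p + 1) = eb k" "- eb k - (real p + 1) = ea k" for k
    unfolding ea_def eb_def pr by simp_all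
  have ea_ec: "2 * real n - ea k - (real p + 1) = ec k" "2 * real n - ec k - (real p + 1) = ea k" for k
    unfolding ea_def ec_def pr by simp_all
  have iW: "integrable lborel (\<lambda>u. indicator ?N u * (cardB_deriv p r (u - a) * cardB_deriv p r (u - b)))"
    for a b by (rule integrable_cardB_corr_on) simp
  have lhs: "(\<integral>u. indicator ?N u * (reduced_profile p r (ea i) (eb i) (ec i) u
                                   * reduced_profile p r (ea j) (eb j) (ec j) u) \<partial>lborel)
      = ?W ?N (ea i) (ea j) - ?W ?N (ea i) (eb j) - ?W ?N (ea i) (ec j)
        - ?W ?N (eb i) (ea j) + ?W ?N (eb i) (eb j) + ?W ?N (eb i) (ec j)
        - ?W ?N (ec i) (ea j) + ?W ?N (ec i) (eb j) + ?W ?N (ec i) (ec j)"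
    unfolding cardB_corr_on_def reduced_profile_def
    by (simp add: algebra_simps Bochner_Integration.integral_add Bochner_Integration.integral_diff iW)
  have split: "?W UNIV a b = ?W {..<0} a b + ?W ?N a b + ?W {real n<..} a b" for a b
    by (rule cardB_corr_on_split) simp
  have "?W UNIV (ea i) (ea j) = cardB_corr p r (real i - real j)"
    unfolding cardB_corr_on_UNIV ea_def by simp
  moreover have "?W UNIV (ea i) (eb j) = cardB_corr p r (real i + real j - 1)"
    unfolding cardB_corr_on_UNIV ea_def eb_def by (simp add: algebra_simps)
  moreover have "?W UNIV (ea i) (ec j) = cardB_corr p r (2 * real n + 1 - real i - real j)"
    using cardB_corr_even[of p r "2 * real n + 1 - real i - real j"]
    unfolding cardB_corr_on_UNIV ea_def ec_def by (simp add: algebra_simps)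
  moreover have "?W {..<0} (ea i) (ea j) = ?W ?N (eb i) (eb j)"
    by (rule cardB_corr_on_left_tail[OF rp, where c="real n" and a="ea i" and b="ea j", unfolded ea_eb])
      (use eb0[OF i] mn in auto)
  moreover have "?W {..<0} (ea i) (eb j) = ?W ?N (eb i) (ea j)"
    by (rule cardB_corr_on_left_tail[OF rp, where c="real n" and a="ea i" and b="eb j", unfolded ea_eb])
      (use eb0[OF i] mn in auto)
  moreover have "?W {..<0} (ea i) (ec j) = 0"
    by (rule cardB_corr_on_eq_0) (use ec0[OF j] mn in auto)
  moreover have "?W {real n<..} (ea i) (ea j) = ?W ?N (ec i) (ec j)"
    by (rule cardB_corr_on_right_tail[OF rp, where c="real n" and a="ea i" and b="ea j", unfolded ea_ec])
      (use ec0[OF i] mn in auto)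
  moreover have "?W {real n<..} (ea i) (eb j) = 0"
    by (rule cardB_corr_on_eq_0) (use eb0[OF j] mn in auto)
  moreover have "?W {real n<..} (ea i) (ec j) = ?W ?N (ec i) (ea j)"
    by (rule cardB_corr_on_right_tail[OF rp, where c="real n" and a="ea i" and b="ec j", unfolded ea_ec])
      (use ec0[OF i] mn in auto)
  moreover have "?W ?N (eb i) (ec j) = 0" "?W ?N (ec i) (eb j) = 0"
    using eb0[OF i] eb0[OF j] ec0[OF i] ec0[OF j]
    by (intro cardB_corr_on_eq_0, metis mult_zero_left mult_zero_right not_less order.strict_trans1 mn)+
  ultimately show ?thesis unfolding lhs split by simp
qed

lemma cardB_eq_0_far_shift:
  fixes m n :: nat and l :: int
  assumes "m < n" "2 \<le> \<bar>l\<bar>" "real m + 1/2 - real n < y" "y < real n + real m + 1/2"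
  shows "cardB (2 * m) (y - of_int l * real n) = 0"
proof (rule cardB_eq_0_outside)
  consider "2 \<le> l" | "l \<le> -2" using assms(2) by linarith
  then show "y - of_int l * real n < 0 \<or> real (2 * m) + 1 \<le> y - of_int l * real n"
  proof cases
    case 1
    then have "2 * real n \<le> of_int l * real n" by (intro mult_right_mono) auto
    with assms show ?thesis by linarith
  next
    case 2
    then have "of_int l * real n \<le> -2 * real n" by (intro mult_right_mono) auto
    with assms show ?thesis by linarith
  qed
qed

text \<open>Near \<open>[0, 1]\<close> only the summand with index \<open>0\<close> of the positive part and those with
  indices \<open>0\<close> and \<open>1\<close> of the negative part of the sum defining \<open>redB\<close> survive.\<close>
lemma redB_eq_reduced_profile:
  fixes p n i m :: nat
  assumes pm: "p = 2 * m" and nm: "2 * m < n" and i: "i \<in> {1..n}"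
    and x: "- 1/2 < real n * x" "real n * x < real n + 1/2"
  shows "redB p n i x = reduced_profile p 0 (real i - 1 - real m) (- real i - real m)
                          (2 * real n - real i - real m) (real n * x)"
proof -
  define y where "y = real n * x - (real i - 1 - real m)"
  define z where "z = real n * x + real i + real m - real n"
  have "m < n" using nm by simp
  have yz: "real m + 1/2 - real n < y" "y < real n + real m + 1/2"
      "real m + 1/2 - real n < z" "z < real n + real m + 1/2"
    using x i unfolding y_def z_def by auto
  have h: "(real p + 1) / 2 = real m + 1/2" using pm by simp
  have pos: "shiftB p n (real i - 1/2 + 2 * real_of_int k * real n) x
      = cardB p (y - of_int (2 * k) * real n)" for k
    unfolding shiftB_def h y_def by (simp add: algebra_simps)
  have neg: "shiftB p n (- (real i - 1/2) + 2 * real_of_int k * real n) x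
      = cardB p (z - of_int (2 * k - 1) * real n)" for k
    unfolding shiftB_def h z_def by (simp add: algebra_simps)
  define f where "f k = shiftB p n (real i - 1/2 + 2 * real_of_int k * real n) x
    - shiftB p n (- (real i - 1/2) + 2 * real_of_int k * real n) x" for k :: int
  have "f k = 0" if "k \<notin> {0, 1}" for k
  proof -
    have "2 \<le> \<bar>2 * k\<bar>" "2 \<le> \<bar>2 * k - 1\<bar>" using that by auto
    then show ?thesis
      unfolding f_def pos neg
      using cardB_eq_0_far_shift[OF \<open>m < n\<close> _ yz(1,2), of "2 * k"]
        cardB_eq_0_far_shift[OF \<open>m < n\<close> _ yz(3,4), of "2 * k - 1"]
      by (simp add: pm)
  qed
  then have "redB p n i x = f 0 + f 1"
    unfolding redB_def f_def[symmetric] by (subst infsum_cong_neutral[of "{0, 1}"]) auto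
  also have "\<dots> = cardB p y - cardB p (z + real n) - cardB p (z - real n)"
    unfolding f_def pos neg
    using cardB_eq_0_far_shift[OF \<open>m < n\<close> _ yz(1,2), of 2] by (simp add: pm)
  finally show ?thesis
    unfolding reduced_profile_def y_def z_def by (simp add: algebra_simps)
qed

lemma has_real_derivative_scaled_reduced_profile:
  assumes "r < p" "Suc r < p \<or> real n * x \<notin> \<int>" "a \<in> \<int>" "b \<in> \<int>" "c \<in> \<int>"
  shows "((\<lambda>x. real n ^ r * reduced_profile p r a b c (real n * x)) has_real_derivative
      real n ^ Suc r * reduced_profile p (Suc r) a b c (real n * x)) (at x)"
proof -
  have "((\<lambda>x. cardB_deriv p r (real n * x - d)) has_real_derivative
      cardB_deriv p (Suc r) (real n * x - d) * real n) (at x)" if "d \<in> \<int>" for d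
  proof (rule DERIV_chain2[where f="cardB_deriv p r"])
    show "(cardB_deriv p r has_real_derivative cardB_deriv p (Suc r) (real n * x - d)) (at (real n * x - d))"
      using assms(1,2) that by (intro has_real_derivative_cardB_deriv) auto
  qed (auto intro!: derivative_eq_intros)
  from DERIV_cmult[OF DERIV_diff[OF DERIV_diff[OF this[OF assms(3)] this[OF assms(4)]] this[OF assms(5)]],
      of "real n ^ r"]
  show ?thesis unfolding reduced_profile_def by (simp add: algebra_simps)
qed

lemma funpow_deriv_scaled_reduced_profile:
  assumes "a \<in> \<int>" "b \<in> \<int>" "c \<in> \<int>" "r \<le> p" "r < p \<or> real n * x \<notin> \<int>"
  shows "(deriv ^^ r) (\<lambda>x. reduced_profile p 0 a b c (real n * x)) x
    = real n ^ r * reduced_profile p r a b c (real n * x)"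
proof -
  have below_p: "(deriv ^^ q) (\<lambda>x. reduced_profile p 0 a b c (real n * x))
      = (\<lambda>x. real n ^ q * reduced_profile p q a b c (real n * x))" if "q < p" for q
    using that
  proof (induction q)
    case (Suc q)
    then have "(deriv ^^ Suc q) (\<lambda>x. reduced_profile p 0 a b c (real n * x))
        = deriv (\<lambda>x. real n ^ q * reduced_profile p q a b c (real n * x))" by simp
    also have "\<dots> = (\<lambda>y. real n ^ Suc q * reduced_profile p (Suc q) a b c (real n * y))"
      using Suc.prems assms(1-3)
      by (intro ext DERIV_imp_deriv has_real_derivative_scaled_reduced_profile) auto
    finally show ?case .
  qed simp
  show ?thesis
  proof (cases "r < p")
    case False
    show ?thesis
    proof (cases r)
      case (Suc q)
      with False assms(4,5) have "q < p" "real n * x \<notin> \<int>" by auto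
      then show ?thesis
        using below_p[of q] has_real_derivative_scaled_reduced_profile[of q p n x a b c] assms(1-3) Suc
        by (auto intro!: DERIV_imp_deriv)
    qed simp
  qed (simp add: below_p)
qed

lemma funpow_deriv_redB:
  fixes p n k m :: nat
  assumes pm: "p = 2 * m" and nm: "2 * m < n" and k: "k \<in> {1..n}" and "r \<le> p"
    and x: "x \<in> {0..1}" and "r < p \<or> real n * x \<notin> \<int>"
  shows "(deriv ^^ r) (redB p n k) x = real n ^ r *
    reduced_profile p r (real k - 1 - real m) (- real k - real m) (2 * real n - real k - real m) (real n * x)"
proof -
  define U where "U = {x. - 1/2 < real n * x \<and> real n * x < real n + 1/2}"
  have "open U" unfolding U_def by (intro open_Collect_conj open_Collect_less continuous_intros)
  moreover have "x \<in> U"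
    using x mult_left_le[of x "real n"] unfolding U_def by (auto intro: order.strict_trans2[of _ 0])
  ultimately have "eventually (\<lambda>y. y \<in> U) (nhds x)" by (rule eventually_nhds_in_open)
  then have "eventually (\<lambda>y. redB p n k y = reduced_profile p 0 (real k - 1 - real m) (- real k - real m)
      (2 * real n - real k - real m) (real n * y)) (nhds x)"
    by eventually_elim (use redB_eq_reduced_profile[OF pm nm k] in \<open>auto simp: U_def\<close>)
  from higher_deriv_cong_ev[OF this refl] show ?thesis
    using assms by (simp add: funpow_deriv_scaled_reduced_profile)
qed

lemma borel_measurable_reduced_profile [measurable]:
  "reduced_profile p r a b c \<in> borel_measurable borel"
  unfolding reduced_profile_def[abs_def] by measurable

lemma reduced_profile_bounded: "\<exists>B. \<forall>u. \<bar>reduced_profile p r a b c u\<bar> \<le> B"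
proof -
  obtain B where B: "\<And>t. \<bar>cardB_deriv p r t\<bar> \<le> B" using cardB_deriv_bounded by blast
  have "\<bar>reduced_profile p r a b c u\<bar> \<le> 3 * B" for u
    using B[of "u - a"] B[of "u - b"] B[of "u - c"] unfolding reduced_profile_def by linarith
  then show ?thesis by blast
qed

lemma has_integral_reduced_profile_product:
  fixes p r n i j m :: nat
  assumes "p = 2 * m" "2 * m < n" "i \<in> {1..n}" "j \<in> {1..n}" "r \<le> p"
  defines "P \<equiv> \<lambda>k. reduced_profile p r (real k - 1 - real m) (- real k - real m) (2 * real n - real k - real m)"
  shows "((\<lambda>u. P i u * P j u) has_integral
      cardB_corr p r (real i - real j) - cardB_corr p r (real i + real j - 1)
      - cardB_corr p r (2 * real n + 1 - real i - real j)) {0..real n}"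
proof -
  obtain B1 where B1: "\<And>u. \<bar>P i u\<bar> \<le> B1" unfolding P_def using reduced_profile_bounded by blast
  obtain B2 where B2: "\<And>u. \<bar>P j u\<bar> \<le> B2" unfolding P_def using reduced_profile_bounded by blast
  have "0 \<le> B1" using B1[of 0] by linarith
  have "integrable lborel (\<lambda>u. (indicator {0..real n} u * P i u) * P j u)"
    by (rule integrable_mult_bounded_compact_support[where Bf=B1 and Bg=B2 and a=0 and b="real n"])
      (use B1 B2 \<open>0 \<le> B1\<close> in \<open>auto simp: indicator_def P_def\<close>)
  from has_integral_integral_lborel[OF this]
  have H: "((\<lambda>u. indicator {0..real n} u * (P i u * P j u)) has_integral
      cardB_corr p r (real i - real j) - cardB_corr p r (real i + real j - 1)
      - cardB_corr p r (2 * real n + 1 - real i - real j)) UNIV"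
    using integral_reduced_profile_product[OF assms(1-5)] unfolding P_def by (simp add: mult.assoc)
  have "(\<lambda>u. indicator {0..real n} u * (P i u * P j u))
      = (\<lambda>u. if u \<in> {0..real n} then P i u * P j u else 0)"
    by (simp add: fun_eq_iff indicator_def)
  from H[unfolded this] show ?thesis by (rule has_integral_restrict_UNIV[THEN iffD1])
qed

lemma mult_notin_Ints_off_grid:
  assumes "0 < n" "x \<in> {0..1} - (\<lambda>k. real k / real n) ` {0..n}"
  shows "real n * x \<notin> \<int>"
proof
  assume "real n * x \<in> \<int>"
  then obtain z where z: "real n * x = real_of_int z" by (auto elim: Ints_cases)
  have "0 \<le> real n * x" "real n * x \<le> real n" using assms by (auto simp: mult_left_le)
  then have "0 \<le> z" "z \<le> int n" using z by linarith+
  then have "nat z \<in> {0..n}" "x = real (nat z) / real n" using z assms(1) by (auto simp: field_simps)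
  with assms(2) show False by blast
qed

lemma Xbar_eq_cardB_corr:
  fixes p r n i j m :: nat
  assumes pm: "p = 2 * m" and nm: "2 * m < n" and i: "i \<in> {1..n}" and j: "j \<in> {1..n}" and rp: "r \<le> p"
  shows "Xbar p r n i j = real n ^ (2 * r) / real n * (cardB_corr p r (real i - real j)
      - cardB_corr p r (real i + real j - 1) - cardB_corr p r (2 * real n + 1 - real i - real j))"
proof -
  define P where "P = (\<lambda>k. reduced_profile p r (real k - 1 - real m) (- real k - real m)
    (2 * real n - real k - real m))"
  define Q where "Q = cardB_corr p r (real i - real j) - cardB_corr p r (real i + real j - 1)
    - cardB_corr p r (2 * real n + 1 - real i - real j)"
  have n: "0 < n" using nm by simp
  have "((\<lambda>x. P i (real n * x) * P j (real n * x)) has_integral (1 / real n) * Q) {0..1}"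
    using has_integral_stretch_real[OF has_integral_reduced_profile_product[OF assms], of "real n"] n
    unfolding P_def Q_def by simp
  then have "((\<lambda>x. real n ^ (2 * r) * (P i (real n * x) * P j (real n * x)))
      has_integral real n ^ (2 * r) / real n * Q) {0..1}"
    using has_integral_mult_right[of _ "(1 / real n) * Q" _ "real n ^ (2 * r)"] by simp
  then have "((\<lambda>x. (deriv ^^ r) (redB p n i) x * (deriv ^^ r) (redB p n j) x)
      has_integral real n ^ (2 * r) / real n * Q) {0..1}"
  proof (rule has_integral_spike_finite[where S="(\<lambda>k. real k / real n) ` {0..n}", rotated 2])
    fix x assume x: "x \<in> {0..1} - (\<lambda>k. real k / real n) ` {0..n}"
    then have "real n * x \<notin> \<int>" by (rule mult_notin_Ints_off_grid[OF n])
    with x have "(deriv ^^ r) (redB p n k) x = real n ^ r * P k (real n * x)" if "k \<in> {1..n}" for k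
      unfolding P_def by (intro funpow_deriv_redB[OF pm nm that rp]) auto
    then show "(deriv ^^ r) (redB p n i) x * (deriv ^^ r) (redB p n j) x
        = real n ^ (2 * r) * (P i (real n * x) * P j (real n * x))"
      using i j by (simp add: mult_2 power_add)
  qed simp
  then show ?thesis unfolding Xbar_def Q_def by (rule integral_unique)
qed

lemma alphaSeq_eq_cardB_corr: "r \<le> p \<Longrightarrow> alphaSeq p r k = cardB_corr p r (real k)"
  unfolding alphaSeq_def
  using cardB_corr_eq[of r p "real k"] funpow_deriv_cardB[of "2 * r" "2 * p + 1"]
    cardB_deriv_eq_0_nonpos[of "2 * r" "2 * p + 1" "real p + 1 - real k"]
  by auto

lemma toepM_alphaSeq: "r \<le> p \<Longrightarrow> toepM (alphaSeq p r) i j = cardB_corr p r (real i - real j)"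
  unfolding toepM_def alphaSeq_eq_cardB_corr
  by (cases "i \<le> j") (auto simp: of_nat_diff cardB_corr_even[of p r "real i - real j", symmetric])

lemma hankM_alphaSeq:
  "r \<le> p \<Longrightarrow> i \<in> {1..n} \<Longrightarrow> j \<in> {1..n} \<Longrightarrow> hankM (alphaSeq p r) n i j
     = cardB_corr p r (real i + real j - 1) + cardB_corr p r (2 * real n + 1 - real i - real j)"
  unfolding hankM_def alphaSeq_eq_cardB_corr by (simp add: of_nat_diff algebra_simps)

theorem mainTheorem13:
  fixes p n r :: nat
  assumes "p \<ge> 1" and "even p" and "real n \<ge> real p + real p / 2" and "r \<le> p"
  shows "\<forall>i\<in>{1..n}. \<forall>j\<in>{1..n}.
           Xbar p r n i j = real n powi (2 * int r - 1)
             * (toepM (alphaSeq p r) i j - hankM (alphaSeq p r) n i j)"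
proof (intro ballI)
  fix i j assume i: "i \<in> {1..n}" and j: "j \<in> {1..n}"
  obtain m where pm: "p = 2 * m" using assms(2) by (elim evenE)
  have nm: "2 * m < n" using assms(1,3) pm by simp
  have "2 * int r = int (2 * r)" by simp
  with nm have "real n powi (2 * int r - 1) = real n ^ (2 * r) / real n"
    by (simp only:) (simp add: power_int_diff power_int_of_nat del: of_nat_mult)
  then show "Xbar p r n i j = real n powi (2 * int r - 1)
      * (toepM (alphaSeq p r) i j - hankM (alphaSeq p r) n i j)"
    using Xbar_eq_cardB_corr[OF pm nm i j assms(4)]
    by (simp add: toepM_alphaSeq[OF assms(4)] hankM_alphaSeq[OF assms(4) i j])
qed

end
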